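(* Let $(\tau,\eta)\in\Sigma$ with $\gamma=\mathrm{Re}\,\tau=0$. (i) If $(\tau,\eta)$ is not a point with $\delta=-\dot v\eta\pm\frac{\dot H}{\sqrt{\dot\rho(1+\dot\alpha\dot H^2)}}\eta$, and $\omega_1(\tau,\eta)\in i\mathbb R\setminus\{0\}$, then $\partial_\gamma\omega_1(\tau,\eta)\in\mathbb R\setminus\{0\}$. (ii) If $\omega_2(\tau,\eta)\in i\mathbb R\setminus\{0\}$, then $\partial_\gamma\omega_2(\tau,\eta)\in\mathbb R\setminus\{0\}$.
   Context: Constants of a basic state: $\dot v\neq0$, $\dot\rho>0$, $\dot H\neq0$, $\dot\alpha>0$ with $\dot\alpha\dot H^2\neq1$; $\varepsilon>0$ a parameter. Write $\tau=\gamma+i\delta$, $\Sigma=\{(\tau,\eta)\in\mathbb C\times\mathbb R:|\tau|^2+\eta^2=1,\ \gamma\ge0\}$, $\mu=\tau+i\dot v\eta$. Set \[ \omega_1^2=\eta^2+\frac{\dot\alpha\dot\rho^2\mu^4}{(\mu^2\dot\rho\dot\alpha+\eta^2)\dot H^2+\mu^2\dot\rho},\qquad \omega_2^2=\varepsilon^2\tau^2+\eta^2 . \] For $\gamma>0$, $\omega_1$ and $\omega_2$ denote the square roots with strictly positive real part; they are extended by continuity to $\gamma=0$ (where defined). $\partial_\gamma$ is the partial derivative in $\gamma$ with $\delta,\eta$ fixed. *)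

theory Defs
  imports "HOL-Analysis.Analysis"
begin

definition mu :: "real \<Rightarrow> complex \<Rightarrow> real \<Rightarrow> complex" where
  "mu v tau eta = tau + \<i> * complex_of_real (v * eta)"

definition omega1_sq :: "real \<Rightarrow> real \<Rightarrow> real \<Rightarrow> real \<Rightarrow> complex \<Rightarrow> real \<Rightarrow> complex" where
  "omega1_sq v rho H alpha tau eta =
     complex_of_real (eta^2)
     + complex_of_real (alpha * rho^2) * (mu v tau eta)^4
       / (((mu v tau eta)^2 * complex_of_real (rho * alpha) + complex_of_real (eta^2))
            * complex_of_real (H^2)
          + (mu v tau eta)^2 * complex_of_real rho)"

definition omega2_sq :: "real \<Rightarrow> complex \<Rightarrow> real \<Rightarrow> complex" where
  "omega2_sq eps tau eta = complex_of_real (eps^2) * tau^2 + complex_of_real (eta^2)"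

text \<open>For Re tau > 0 the root is the square root with positive real part (csqrt).
  root_ext f tau eta w: the continuous extension of (tau,eta) |-> csqrt (f tau eta)
  from {Re tau > 0} to the point (tau,eta) exists and equals w.\<close>
definition root_ext :: "(complex \<Rightarrow> real \<Rightarrow> complex) \<Rightarrow> complex \<Rightarrow> real \<Rightarrow> complex \<Rightarrow> bool" where
  "root_ext f tau eta w \<longleftrightarrow>
     ((\<lambda>p. csqrt (f (fst p) (snd p))) \<longlongrightarrow> w) (at (tau, eta) within {p. 0 < Re (fst p)})"

text \<open>gamma_deriv f tau eta w d: at a point with Re tau = 0 where the extended root has
  value w, the partial derivative in gamma (delta, eta fixed) exists and equals d.
  Since the root is only defined for gamma >= 0, this is the derivative within gamma >= 0.\<close>
definition gamma_deriv ::
  "(complex \<Rightarrow> real \<Rightarrow> complex) \<Rightarrow> complex \<Rightarrow> real \<Rightarrow> complex \<Rightarrow> complex \<Rightarrow> bool" where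
  "gamma_deriv f tau eta w d \<longleftrightarrow>
     ((\<lambda>s::real. if s = 0 then w else csqrt (f (tau + complex_of_real s) eta))
        has_vector_derivative d) (at 0 within {0..})"

end

theory Submission
  imports Defs
begin

text \<open>
  On the line \<open>\<gamma> = 0\<close> each radicand \<open>f\<close> is holomorphic in \<open>\<tau>\<close>, and near a nonzero limit \<open>w\<close>
  the root with positive real part agrees with the holomorphic branch \<open>w \<cdot> csqrt (f / w\<^sup>2)\<close>,
  since two square roots of the same number that are both close to \<open>w\<close> cannot be opposite.
  Hence \<open>\<partial>\<^sub>\<gamma>\<omega> = f'(\<tau>) / (2 w)\<close>. Writing \<open>\<omega>\<^sub>1\<^sup>2 = \<eta>\<^sup>2 + A \<mu>\<^sup>4 / (B \<mu>\<^sup>2 + C)\<close> with \<open>\<mu> = i k\<close> and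
  \<open>\<omega>\<^sub>2\<^sup>2 = \<epsilon>\<^sup>2 \<tau>\<^sup>2 + \<eta>\<^sup>2\<close> with \<open>\<tau> = i \<delta>\<close>, both radicands are real on the imaginary axis, so
  \<open>f'(\<tau>) \<in> i\<real>\<close> and the quotient by \<open>w \<in> i\<real>\<close> is real. It vanishes only if \<open>k = 0\<close> (resp.
  \<open>\<delta> = 0\<close>) or \<open>2 B k\<^sup>2 = 4 C\<close>; in each case \<open>f(\<tau>) \<ge> 0\<close>, the last one because of the AM-GM
  bound \<open>4 A C \<le> \<eta>\<^sup>2 B\<^sup>2\<close>, contradicting \<open>w\<^sup>2 < 0\<close>. The excluded values of \<open>\<delta>\<close> are the poles
  \<open>C = B k\<^sup>2\<close>.
\<close>

lemma eventually_eq_of_power2_eq: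
  fixes u v :: "'a \<Rightarrow> 'b::real_normed_field"
  assumes "(u \<longlongrightarrow> w) F" and "(v \<longlongrightarrow> w) F" and "w \<noteq> 0"
    and "\<forall>\<^sub>F x in F. (u x)\<^sup>2 = (v x)\<^sup>2"
  shows "\<forall>\<^sub>F x in F. u x = v x"
proof -
  have "\<forall>\<^sub>F x in F. dist (u x) w < norm w" "\<forall>\<^sub>F x in F. dist (v x) w < norm w"
    using assms(1-3) by (auto simp: tendsto_iff)
  with assms(4) show ?thesis
  proof eventually_elim
    case (elim x)
    have "u x \<noteq> - v x"
    proof
      assume "u x = - v x"
      then have "norm (2 * w) \<le> norm (w - u x) + norm (w - v x)"
        using norm_triangle_ineq[of "w - u x" "w + u x"] by simp
      also have "\<dots> < 2 * norm w"
        using elim by (simp add: dist_norm norm_minus_commute)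
      finally show False by (simp add: norm_mult)
    qed
    with elim show ?case by (auto simp: power2_eq_iff)
  qed
qed

lemma root_ext_tendsto_at_right:
  assumes "root_ext f tau eta w" and "Re tau = 0"
  shows "((\<lambda>s. csqrt (f (tau + of_real s) eta)) \<longlongrightarrow> w) (at_right 0)"
proof -
  have "filterlim (\<lambda>s::real. (tau + of_real s, eta))
          (at (tau, eta) within {p. 0 < Re (fst p)}) (at_right 0)"
  proof (rule filterlim_at_withinI)
    show "((\<lambda>s::real. (tau + of_real s, eta)) \<longlongrightarrow> (tau, eta)) (at_right 0)"
      by (auto intro!: tendsto_eq_intros)
    show "\<forall>\<^sub>F s in at_right 0. (tau + of_real s, eta) \<in> {p. 0 < Re (fst p)} - {(tau, eta)}"
      using assms(2) by (auto simp: eventually_at_right_field intro!: exI[of _ 1])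
  qed
  from filterlim_compose[OF assms(1)[unfolded root_ext_def] this] show ?thesis
    by simp
qed

lemma has_vector_derivative_along_real_shift:
  assumes "(g has_field_derivative g') (at tau)"
  shows "((\<lambda>s::real. g (tau + of_real s)) has_vector_derivative g') (at 0)"
proof -
  have "((\<lambda>s::real. tau + of_real s) has_vector_derivative 1) (at 0)"
    by (auto intro!: derivative_eq_intros simp: has_vector_derivative_def scaleR_conv_of_real)
  from field_vector_diff_chain_at[OF this, of g] assms show ?thesis
    by (simp add: o_def)
qed

lemma root_ext_square:
  assumes "isCont (\<lambda>z. f z eta) tau" and "root_ext f tau eta w" and "Re tau = 0"
  shows "f tau eta = w\<^sup>2"
proof -
  have "((\<lambda>s::real. tau + of_real s) \<longlongrightarrow> tau) (at_right 0)"
    by (auto intro!: tendsto_eq_intros)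
  from isCont_tendsto_compose[OF assms(1) this]
  have "((\<lambda>s::real. f (tau + of_real s) eta) \<longlongrightarrow> f tau eta) (at_right 0)" .
  moreover have "((\<lambda>s. (csqrt (f (tau + of_real s) eta))\<^sup>2) \<longlongrightarrow> w\<^sup>2) (at_right 0)"
    by (intro tendsto_intros root_ext_tendsto_at_right assms(2,3))
  ultimately show ?thesis
    using tendsto_unique[of "at_right (0::real)"] by fastforce
qed

lemma root_ext_gamma_deriv:
  assumes fd: "((\<lambda>z. f z eta) has_field_derivative f') (at tau)"
    and root: "root_ext f tau eta w" and "w \<noteq> 0" and "Re tau = 0"
  shows "gamma_deriv f tau eta w (f' / (2 * w))"
proof -
  have f_tau: "f tau eta = w\<^sup>2"
    using root_ext_square[OF DERIV_isCont[OF fd] root \<open>Re tau = 0\<close>] .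
  define branch where "branch z = w * csqrt (f z eta / w\<^sup>2)" for z
  have "(branch has_field_derivative w * (f' / w\<^sup>2 / (2 * csqrt (f tau eta / w\<^sup>2)))) (at tau)"
    unfolding branch_def using f_tau \<open>w \<noteq> 0\<close>
    by (auto intro!: derivative_eq_intros fd simp: field_simps eval_nat_numeral)
  moreover have "w * (f' / w\<^sup>2 / (2 * csqrt (f tau eta / w\<^sup>2))) = f' / (2 * w)"
    using f_tau \<open>w \<noteq> 0\<close> by (simp add: field_simps power2_eq_square)
  ultimately have branch_deriv:
    "((\<lambda>s::real. branch (tau + of_real s)) has_vector_derivative f' / (2 * w)) (at 0)"
    using has_vector_derivative_along_real_shift by metis
  have branch_tau: "branch tau = w"
    using f_tau \<open>w \<noteq> 0\<close> by (simp add: branch_def)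
  have "((\<lambda>s::real. branch (tau + of_real s)) \<longlongrightarrow> w) (at_right 0)"
  proof -
    have "isCont (\<lambda>s::real. branch (tau + of_real s)) 0"
      by (rule has_vector_derivative_continuous[OF branch_deriv])
    then show ?thesis
      using branch_tau by (simp add: isCont_def filterlim_at_split)
  qed
  moreover have "\<forall>\<^sub>F s in at_right 0. (csqrt (f (tau + of_real s) eta))\<^sup>2 = (branch (tau + of_real s))\<^sup>2"
    using \<open>w \<noteq> 0\<close> by (simp add: branch_def power_mult_distrib)
  ultimately have "\<forall>\<^sub>F s in at_right 0. csqrt (f (tau + of_real s) eta) = branch (tau + of_real s)"
    by (intro eventually_eq_of_power2_eq[OF root_ext_tendsto_at_right[OF root \<open>Re tau = 0\<close>]]
        \<open>w \<noteq> 0\<close>)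
  then obtain r where "r > 0"
    and agree: "\<And>s. 0 < s \<Longrightarrow> s < r \<Longrightarrow> csqrt (f (tau + of_real s) eta) = branch (tau + of_real s)"
    by (auto simp: eventually_at_right_field)
  show ?thesis
    unfolding gamma_deriv_def
  proof (rule has_vector_derivative_transform_within[OF _ \<open>r > 0\<close>])
    show "((\<lambda>s::real. branch (tau + of_real s)) has_vector_derivative f' / (2 * w)) (at 0 within {0..})"
      using has_vector_derivative_at_within[OF branch_deriv] .
    fix s :: real
    assume "s \<in> {0..}" "dist s 0 < r"
    then show "branch (tau + of_real s) = (if s = 0 then w else csqrt (f (tau + of_real s) eta))"
      using agree[of s] branch_tau by auto
  qed simp
qed

lemma omega2_gamma_deriv_real_nonzero:
  assumes "eps > 0" and "Re tau = 0"
    and root: "root_ext (omega2_sq eps) tau eta w" and "Re w = 0" and "w \<noteq> 0"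
  shows "\<exists>d. gamma_deriv (omega2_sq eps) tau eta w d \<and> Im d = 0 \<and> d \<noteq> 0"
proof -
  define delta b where "delta = Im tau" and "b = Im w"
  have tau: "tau = \<i> * of_real delta" and w: "w = \<i> * of_real b"
    using \<open>Re tau = 0\<close> \<open>Re w = 0\<close> by (simp_all add: complex_eq_iff delta_def b_def)
  have "b \<noteq> 0" using \<open>w \<noteq> 0\<close> w by auto
  have fd: "((\<lambda>z. omega2_sq eps z eta) has_field_derivative of_real (eps\<^sup>2) * (2 * tau)) (at tau)"
    unfolding omega2_sq_def by (auto intro!: derivative_eq_intros)
  have "omega2_sq eps tau eta = w\<^sup>2"
    using root_ext_square[OF DERIV_isCont[OF fd] root \<open>Re tau = 0\<close>] .
  then have "eta\<^sup>2 + b\<^sup>2 = eps\<^sup>2 * delta\<^sup>2"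
    by (simp add: omega2_sq_def tau w power2_eq_square complex_eq_iff)
  with \<open>b \<noteq> 0\<close> have "delta \<noteq> 0"
    by (auto simp: sum_power2_eq_zero_iff)
  have "of_real (eps\<^sup>2) * (2 * tau) / (2 * w) = of_real (eps\<^sup>2 * delta / b)"
    using \<open>b \<noteq> 0\<close> by (simp add: tau w field_simps)
  with root_ext_gamma_deriv[OF fd root \<open>w \<noteq> 0\<close> \<open>Re tau = 0\<close>] \<open>eps > 0\<close> \<open>delta \<noteq> 0\<close> \<open>b \<noteq> 0\<close>
  show ?thesis
    by (intro exI[of _ "of_real (eps\<^sup>2 * delta / b)"]) auto
qed

definition quartic_ratio :: "real \<Rightarrow> real \<Rightarrow> real \<Rightarrow> complex \<Rightarrow> complex" where
  "quartic_ratio A B C z = of_real A * z ^ 4 / (of_real B * z\<^sup>2 + of_real C)"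

lemma omega1_sq_eq_quartic_ratio:
  "omega1_sq v rho H alpha z eta =
     of_real (eta\<^sup>2)
     + quartic_ratio (alpha * rho\<^sup>2) (rho * (1 + alpha * H\<^sup>2)) (eta\<^sup>2 * H\<^sup>2) (mu v z eta)"
  unfolding omega1_sq_def quartic_ratio_def by (simp add: algebra_simps)

lemma quartic_ratio_imaginary:
  "quartic_ratio A B C (\<i> * of_real k) = of_real (A * k ^ 4 / (C - B * k\<^sup>2))"
  by (simp add: quartic_ratio_def power_mult_distrib)

lemma has_field_derivative_quartic_ratio:
  assumes "of_real B * m\<^sup>2 + of_real C \<noteq> (0 :: complex)"
  shows "(quartic_ratio A B C has_field_derivative
           of_real A * m ^ 3 * (2 * of_real B * m\<^sup>2 + 4 * of_real C) / (of_real B * m\<^sup>2 + of_real C)\<^sup>2)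
         (at m)"
  unfolding quartic_ratio_def[abs_def]
  by (rule derivative_eq_intros refl assms)+ (use assms in \<open>simp add: field_simps eval_nat_numeral\<close>)

lemma has_field_derivative_quartic_ratio_imaginary:
  assumes "C - B * k\<^sup>2 \<noteq> 0"
  shows "(quartic_ratio A B C has_field_derivative
           - \<i> * of_real (A * k ^ 3 * (4 * C - 2 * B * k\<^sup>2) / (C - B * k\<^sup>2)\<^sup>2)) (at (\<i> * of_real k))"
proof -
  have den: "of_real B * (\<i> * of_real k)\<^sup>2 + of_real C = (of_real (C - B * k\<^sup>2) :: complex)"
    by (simp add: power_mult_distrib)
  have value_eq: "of_real A * (\<i> * of_real k) ^ 3 * (2 * of_real B * (\<i> * of_real k)\<^sup>2 + 4 * of_real C)
          / (of_real (C - B * k\<^sup>2))\<^sup>2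
        = - \<i> * of_real (A * k ^ 3 * (4 * C - 2 * B * k\<^sup>2) / (C - B * k\<^sup>2)\<^sup>2)"
    by (simp add: power_mult_distrib eval_nat_numeral algebra_simps)
  have "of_real B * (\<i> * of_real k)\<^sup>2 + of_real C \<noteq> (0 :: complex)"
    unfolding den of_real_eq_0_iff by (rule assms)
  from has_field_derivative_quartic_ratio[OF this, of A] show ?thesis
    unfolding den value_eq .
qed

lemma power2_diff_scaled_neq_0:
  fixes B c k :: real
  assumes "B > 0" and "k \<noteq> c / sqrt B" and "k \<noteq> - (c / sqrt B)"
  shows "c\<^sup>2 - B * k\<^sup>2 \<noteq> 0"
proof
  assume "c\<^sup>2 - B * k\<^sup>2 = 0"
  then have "(k * sqrt B)\<^sup>2 = c\<^sup>2"
    using \<open>B > 0\<close> by (simp add: power_mult_distrib)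
  then have "k * sqrt B = c \<or> k * sqrt B = - c"
    by (simp add: power2_eq_iff)
  with assms show False
    by (auto simp: field_simps)
qed

lemma quartic_ratio_deriv_factor_neq_0:
  fixes A B C e k :: real
  assumes "B > 0" and "4 * A * C \<le> e * B\<^sup>2" and "e + A * k ^ 4 / (C - B * k\<^sup>2) < 0"
  shows "4 * C - 2 * B * k\<^sup>2 \<noteq> 0"
proof
  assume "4 * C - 2 * B * k\<^sup>2 = 0"
  then have k2: "k\<^sup>2 = 2 * C / B" and "C - B * k\<^sup>2 = - C"
    using \<open>B > 0\<close> by (simp_all add: field_simps)
  moreover have "k ^ 4 = (k\<^sup>2)\<^sup>2"
    by (simp add: eval_nat_numeral)
  ultimately have "A * k ^ 4 / (C - B * k\<^sup>2) = - (4 * A * C / B\<^sup>2)"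
    using \<open>B > 0\<close> by (cases "C = 0") (simp_all add: power2_eq_square field_simps)
  moreover have "4 * A * C / B\<^sup>2 \<le> e"
    using assms(1,2) by (simp add: field_simps)
  ultimately show False
    using assms(3) by linarith
qed

lemma quartic_ratio_radicand_gamma_deriv_real_nonzero:
  fixes A B C e c :: real
  assumes "A > 0" and "B > 0" and "0 \<le> e" and am_gm: "4 * A * C \<le> e * B\<^sup>2"
    and f: "\<And>z. f z eta = of_real e + quartic_ratio A B C (z + \<i> * of_real c)"
    and "Re tau = 0" and D: "C - B * (Im tau + c)\<^sup>2 \<noteq> 0"
    and root: "root_ext f tau eta w" and "Re w = 0" and "w \<noteq> 0"
  shows "\<exists>d. gamma_deriv f tau eta w d \<and> Im d = 0 \<and> d \<noteq> 0"
proof -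
  define k b where "k = Im tau + c" and "b = Im w"
  define X where "X = A * k ^ 3 * (4 * C - 2 * B * k\<^sup>2) / (C - B * k\<^sup>2)\<^sup>2"
  have shift: "tau + \<i> * of_real c = \<i> * of_real k" and w: "w = \<i> * of_real b"
    using \<open>Re tau = 0\<close> \<open>Re w = 0\<close> by (simp_all add: complex_eq_iff k_def b_def)
  have "b \<noteq> 0" using \<open>w \<noteq> 0\<close> w by auto
  have q_deriv: "(quartic_ratio A B C has_field_derivative - \<i> * of_real X) (at (tau + \<i> * of_real c))"
    unfolding shift X_def by (rule has_field_derivative_quartic_ratio_imaginary[OF D[folded k_def]])
  have "((\<lambda>z. z + \<i> * of_real c) has_field_derivative 1) (at tau)"
    by (auto intro!: derivative_eq_intros)
  from DERIV_add[OF DERIV_const DERIV_chain2[OF q_deriv this], of "of_real e"]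
  have fd: "((\<lambda>z. f z eta) has_field_derivative - \<i> * of_real X) (at tau)"
    by (simp add: f)
  have "f tau eta = w\<^sup>2"
    using root_ext_square[OF DERIV_isCont[OF fd] root \<open>Re tau = 0\<close>] .
  then have "of_real (e + A * k ^ 4 / (C - B * k\<^sup>2)) = (of_real (- b\<^sup>2) :: complex)"
    by (simp add: f shift quartic_ratio_imaginary w power_mult_distrib)
  then have f_tau: "e + A * k ^ 4 / (C - B * k\<^sup>2) = - b\<^sup>2"
    by (rule of_real_eq_iff[THEN iffD1])
  have "k \<noteq> 0"
    using f_tau \<open>0 \<le> e\<close> \<open>b \<noteq> 0\<close> by (auto simp: add_nonneg_eq_0_iff)
  have "4 * C - 2 * B * k\<^sup>2 \<noteq> 0"
    using f_tau \<open>b \<noteq> 0\<close> by (intro quartic_ratio_deriv_factor_neq_0[OF \<open>B > 0\<close> am_gm]) simp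
  then have "X / (2 * b) \<noteq> 0"
    using \<open>A > 0\<close> \<open>k \<noteq> 0\<close> \<open>b \<noteq> 0\<close> D by (simp add: X_def k_def)
  moreover have "- \<i> * of_real X / (2 * w) = of_real (- X / (2 * b))"
    by (simp add: w complex_eq_iff)
  ultimately show ?thesis
    using root_ext_gamma_deriv[OF fd root \<open>w \<noteq> 0\<close> \<open>Re tau = 0\<close>]
    by (intro exI[of _ "of_real (- X / (2 * b))"]) auto
qed

lemma omega1_gamma_deriv_real_nonzero:
  assumes "rho > 0" and "alpha > 0" and "Re tau = 0"
    and off_plus: "Im tau \<noteq> - v * eta + H / sqrt (rho * (1 + alpha * H\<^sup>2)) * eta"
    and off_minus: "Im tau \<noteq> - v * eta - H / sqrt (rho * (1 + alpha * H\<^sup>2)) * eta"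
    and root: "root_ext (omega1_sq v rho H alpha) tau eta w" and "Re w = 0" and "w \<noteq> 0"
  shows "\<exists>d. gamma_deriv (omega1_sq v rho H alpha) tau eta w d \<and> Im d = 0 \<and> d \<noteq> 0"
proof (rule quartic_ratio_radicand_gamma_deriv_real_nonzero)
  let ?B = "rho * (1 + alpha * H\<^sup>2)"
  show "alpha * rho\<^sup>2 > 0" and "?B > 0"
    using assms(1,2) by (simp_all add: add_pos_nonneg)
  have "Im tau + v * eta \<noteq> H * eta / sqrt ?B" and "Im tau + v * eta \<noteq> - (H * eta / sqrt ?B)"
    using off_plus off_minus by auto
  from power2_diff_scaled_neq_0[OF \<open>?B > 0\<close> this]
  show "eta\<^sup>2 * H\<^sup>2 - ?B * (Im tau + v * eta)\<^sup>2 \<noteq> 0"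
    by (simp add: power_mult_distrib mult.commute)
  have "4 * (alpha * H\<^sup>2) \<le> (1 + alpha * H\<^sup>2)\<^sup>2"
    using zero_le_power2[of "1 - alpha * H\<^sup>2"] by (simp add: power2_eq_square algebra_simps)
  from mult_left_mono[OF this, of "rho\<^sup>2 * eta\<^sup>2"]
  show "4 * (alpha * rho\<^sup>2) * (eta\<^sup>2 * H\<^sup>2) \<le> eta\<^sup>2 * ?B\<^sup>2"
    by (simp add: power_mult_distrib ac_simps)
  show "omega1_sq v rho H alpha z eta
          = of_real (eta\<^sup>2) + quartic_ratio (alpha * rho\<^sup>2) ?B (eta\<^sup>2 * H\<^sup>2) (z + \<i> * of_real (v * eta))"
    for z
    unfolding omega1_sq_eq_quartic_ratio by (simp add: mu_def)
qed (use assms in auto)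

theorem lemma7p2:
  fixes v rho H alpha eps eta :: real and tau :: complex
  assumes "v \<noteq> 0" and "rho > 0" and "H \<noteq> 0" and "alpha > 0" and "alpha * H^2 \<noteq> 1"
    and "eps > 0"
    and "(cmod tau)^2 + eta^2 = 1" and "Re tau = 0"
  shows "(\<forall>w. Im tau \<noteq> - v * eta + H / sqrt (rho * (1 + alpha * H^2)) * eta
              \<and> Im tau \<noteq> - v * eta - H / sqrt (rho * (1 + alpha * H^2)) * eta
              \<and> root_ext (omega1_sq v rho H alpha) tau eta w \<and> Re w = 0 \<and> w \<noteq> 0
           \<longrightarrow> (\<exists>d. gamma_deriv (omega1_sq v rho H alpha) tau eta w d \<and> Im d = 0 \<and> d \<noteq> 0))
       \<and> (\<forall>w. root_ext (omega2_sq eps) tau eta w \<and> Re w = 0 \<and> w \<noteq> 0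
           \<longrightarrow> (\<exists>d. gamma_deriv (omega2_sq eps) tau eta w d \<and> Im d = 0 \<and> d \<noteq> 0))"
  using omega1_gamma_deriv_real_nonzero[OF \<open>rho > 0\<close> \<open>alpha > 0\<close> \<open>Re tau = 0\<close>]
    omega2_gamma_deriv_real_nonzero[OF \<open>eps > 0\<close> \<open>Re tau = 0\<close>]
  by blast

end
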